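(* Let $n,k\ge 1$ be integers and let $A=(A_{ij})_{1\le i\le n,\,1\le j\le k}$ be an $n\times k$ matrix whose $nk$ entries are independent random variables, each uniformly distributed on $[0,1]$. Run the following algorithm on $A$: \begin{verbatim} minmax = infinity FOR i=1 TO n max = -infinity FOR j=1 TO k t = A[i][j] IF t > max THEN max = t IF t > minmax THEN BREAK IF max < minmax THEN minmax = max \end{verbatim} (it outputs $\min_i\max_j A_{ij}$). Each execution of the instruction t = A[i][j] counts as reading one matrix element. Let $M_{nk}(1)$ denote the expected total number of matrix elements read by the algorithm. Then $$M_{nk}(1)= nk + \sum_{l=1}^{k-1} \sum_{j=1}^{n-1}\binom{n}{j+1} (-1)^{j} \frac{l}{l+jk} = n+k-1+ \sum_{l=1}^{k-1} \sum_{j=1}^{n-1} \prod_{r=1}^{j}\frac{rk}{rk + l}.$$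
   Context: Here $n$ is the number of rows and $k$ the number of columns of the matrix. The BREAK instruction exits the inner loop over $j$ (after the element $A_{ij}$ has been read), and the algorithm then proceeds to the final IF statement for row $i$ and to the next row. Empty sums are zero. *)

theory Defs
  imports "HOL-Probability.Probability"
begin

text \<open>Arguments: the rw, the current
  value of minmax, the remaining column indices, the current value of max.\<close>
fun inner_loop :: "(nat \<Rightarrow> real) \<Rightarrow> ereal \<Rightarrow> nat list \<Rightarrow> ereal \<Rightarrow> ereal \<times> nat" where
  "inner_loop rw mm [] mx = (mx, 0)"
| "inner_loop rw mm (j # js) mx =
     (let t = ereal (rw j);
          mx' = (if t > mx then t else mx)
      in if t > mm then (mx', 1)
         else (let (m2, c) = inner_loop rw mm js mx' in (m2, Suc c)))"

fun outer_loop :: "(nat \<Rightarrow> nat \<Rightarrow> real) \<Rightarrow> nat \<Rightarrow> ereal \<Rightarrow> nat list \<Rightarrow> ereal \<times> nat" where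
  "outer_loop A k mm [] = (mm, 0)"
| "outer_loop A k mm (i # is) =
     (let (mx, c) = inner_loop (A i) mm [0..<k] (-\<infinity>);
          mm' = (if mx < mm then mx else mm);
          (r, c2) = outer_loop A k mm' is
      in (r, c + c2))"

text \<open>Number of matrix elements read by the algorithm on an n x k matrix
  (rows 0..n-1, columns 0..k-1).\<close>
definition reads :: "nat \<Rightarrow> nat \<Rightarrow> (nat \<Rightarrow> nat \<Rightarrow> real) \<Rightarrow> nat" where
  "reads n k A = snd (outer_loop A k \<infinity> [0..<n])"

definition matrix_measure :: "nat \<Rightarrow> nat \<Rightarrow> (nat \<times> nat \<Rightarrow> real) measure" where
  "matrix_measure n k = PiM ({..<n} \<times> {..<k}) (\<lambda>_. uniform_measure lborel {0..1::real})"

end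

(*
  With rows and columns numbered from 0, the algorithm reads entry l of row i exactly when the
  first l entries of row i are at most minmax of rows 0..i-1, i.e. when no earlier row lies
  entirely below the maximum of these l entries.  By inclusion-exclusion over the set T of
  earlier rows that do lie below it, and since the largest of |T| k + l independent uniform
  variables is one of the l given ones with probability l / (l + |T| k), entry l of row i is read
  with probability  \<Sum>s\<le>i. (i choose s) (-1)^s l / (l + s k).  A Beta integral identity turns
  this into  \<Prod>r=1..i. r k / (r k + l).  Summing over i and l by linearity of expectation gives
  the second formula; the first follows from  \<Sum>i<n. (i choose s) = n choose (s + 1).
*)

theory Submission
  imports Defs
begin

lemma inner_loop_reads:
  "snd (inner_loop rw mm js mx) =
     (\<Sum>l<length js. of_bool (\<forall>j\<in>set (take l js). ereal (rw j) \<le> mm))"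
proof (induction js arbitrary: mx)
  case (Cons j js)
  then show ?case
    by (cases "ereal (rw j) > mm")
       (auto simp add: Let_def split_beta sum.lessThan_Suc_shift not_less
             simp del: sum.lessThan_Suc sum_of_bool_eq)
qed simp

lemma inner_loop_minmax:
  "y \<le> (if fst (inner_loop rw mm js mx) < mm then fst (inner_loop rw mm js mx) else mm) \<longleftrightarrow>
     y \<le> mm \<and> (y \<le> mx \<or> (\<exists>j\<in>set js. y \<le> ereal (rw j)))"
proof (induction js arbitrary: mx)
  case (Cons j js)
  show ?case
  proof (cases "ereal (rw j) > mm")
    case False
    then have "fst (inner_loop rw mm (j # js) mx) =
               fst (inner_loop rw mm js (max mx (ereal (rw j))))"
      by (auto simp add: Let_def split_beta max_def)
    then show ?thesis
      using Cons[of "max mx (ereal (rw j))"] by (auto simp: le_max_iff_disj)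
  qed (auto simp: Let_def not_less)
qed (auto simp: not_less)

lemma outer_loop_reads:
  "snd (outer_loop A k mm is) =
     (\<Sum>p<length is. \<Sum>l<k. of_bool (\<forall>j<l. ereal (A (is!p) j) \<le> mm \<and>
                                        (\<forall>q<p. \<exists>j'<k. A (is!p) j \<le> A (is!q) j')))"
proof (induction "is" arbitrary: mm)
  case (Cons i "is")
  define mx where "mx = fst (inner_loop (A i) mm [0..<k] (-\<infinity>))"
  define mm' where "mm' = (if mx < mm then mx else mm)"
  have mm': "ereal t \<le> mm' \<longleftrightarrow> ereal t \<le> mm \<and> (\<exists>j'<k. t \<le> A i j')" for t
    unfolding mm'_def mx_def inner_loop_minmax by auto
  have row: "snd (inner_loop (A i) mm [0..<k] (-\<infinity>)) =
               (\<Sum>l<k. of_bool (\<forall>j<l. ereal (A i j) \<le> mm))"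
    unfolding inner_loop_reads by (intro sum.cong) (auto simp: min_def)
  have "snd (outer_loop A k mm (i # is)) =
          snd (inner_loop (A i) mm [0..<k] (-\<infinity>)) + snd (outer_loop A k mm' is)"
    by (simp add: Let_def split_beta mm'_def mx_def)
  also have "\<dots> = (\<Sum>p<length (i # is). \<Sum>l<k. of_bool (\<forall>j<l. ereal (A ((i # is)!p) j) \<le> mm \<and>
                     (\<forall>q<p. \<exists>j'<k. A ((i # is)!p) j \<le> A ((i # is)!q) j')))"
    unfolding row Cons length_Cons sum.lessThan_Suc_shift mm'
    by (simp add: conj_commute conj_left_commute All_less_Suc2 del: sum_of_bool_eq)
  finally show ?case .
qed simp

lemma reads_eq_sum:
  "reads n k A = (\<Sum>i<n. \<Sum>l<k. of_bool (\<forall>j<l. \<forall>i'<i. \<exists>j'<k. A i j \<le> A i' j'))"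
  unfolding reads_def outer_loop_reads by (intro sum.cong refl) auto

lemma sum_Pow_card:
  fixes g :: "nat \<Rightarrow> 'a::comm_semiring_1"
  assumes "finite A"
  shows "(\<Sum>T\<in>Pow A. g (card T)) = (\<Sum>s\<le>card A. of_nat (card A choose s) * g s)"
proof -
  have "(\<Sum>T\<in>Pow A. g (card T)) = (\<Sum>s\<le>card A. \<Sum>T\<in>{T. T \<in> Pow A \<and> card T = s}. g (card T))"
    by (rule sum.group[symmetric]) (use assms in \<open>auto intro: card_mono\<close>)
  also have "\<dots> = (\<Sum>s\<le>card A. of_nat (card A choose s) * g s)"
    using n_subsets[OF assms] by (intro sum.cong refl) simp
  finally show ?thesis .
qed

lemma sum_binomial_Suc:
  fixes g :: "nat \<Rightarrow> 'a::comm_semiring_1"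
  shows "(\<Sum>s\<le>Suc m. of_nat (Suc m choose s) * g s) =
           (\<Sum>s\<le>m. of_nat (m choose s) * g s) + (\<Sum>s\<le>m. of_nat (m choose s) * g (Suc s))"
proof -
  have shift: "(\<Sum>s\<le>Suc m. of_nat (m' choose s) * g s) =
                 g 0 + (\<Sum>s\<le>m. of_nat (m' choose Suc s) * g (Suc s))" for m'
    by (simp add: sum.atMost_Suc_shift del: sum.atMost_Suc)
  have "(\<Sum>s\<le>Suc m. of_nat (m choose s) * g s) = (\<Sum>s\<le>m. of_nat (m choose s) * g s)"
    by (simp add: binomial_eq_0)
  then show ?thesis
    using shift[of "Suc m"] shift[of m]
    by (simp add: sum.distrib algebra_simps del: sum.atMost_Suc)
qed

lemma sum_binomial_hockey_stick:
  fixes f :: "nat \<Rightarrow> 'a::comm_semiring_1"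
  shows "(\<Sum>i<n. \<Sum>s\<le>i. of_nat (i choose s) * f s) = (\<Sum>s<n. of_nat (n choose Suc s) * f s)"
proof -
  have "(\<Sum>i<n. \<Sum>s\<le>i. of_nat (i choose s) * f s) = (\<Sum>i<n. \<Sum>s<n. of_nat (i choose s) * f s)"
    by (intro sum.cong refl sum.mono_neutral_left) (auto simp: binomial_eq_0)
  also have "\<dots> = (\<Sum>s<n. of_nat (\<Sum>i<n. i choose s) * f s)"
    by (subst sum.swap) (simp add: sum_distrib_right)
  also have "\<dots> = (\<Sum>s<n. of_nat (n choose Suc s) * f s)"
    by (cases n) (simp_all add: lessThan_Suc_atMost sum_choose_upper)
  finally show ?thesis .
qed

lemma sum_lessThan_split_zero:
  fixes f :: "nat \<Rightarrow> 'a::comm_monoid_add"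
  assumes "0 < m"
  shows "(\<Sum>x<m. f x) = f 0 + (\<Sum>x=1..m-1. f x)"
  using assms
  by (cases m) (simp_all add: sum.lessThan_Suc_shift sum.atLeast1_atMost_eq del: sum.lessThan_Suc)

text \<open>Both sides equal the Beta integral \<open>\<integral>\<^sub>0\<^sup>1 t\<^sup>a\<^sup>-\<^sup>1 (1 - t)\<^sup>r dt\<close>.\<close>
lemma alternating_binomial_reciprocal_sum:
  fixes a :: "'a::field_char_0"
  assumes "pochhammer a (Suc r) \<noteq> 0"
  shows "(\<Sum>s\<le>r. of_nat (r choose s) * (-1) ^ s / (a + of_nat s)) = fact r / pochhammer a (Suc r)"
  using assms
proof (induction r arbitrary: a)
  case 0
  then show ?case by simp
next
  case (Suc r)
  define P where "P = pochhammer a (Suc (Suc r))"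
  have P: "P = (a + of_nat (Suc r)) * pochhammer a (Suc r)" "P = a * pochhammer (a + 1) (Suc r)"
    unfolding P_def by (rule pochhammer_rec', rule pochhammer_rec)
  have "P \<noteq> 0" using Suc.prems P_def by simp
  then have nz: "a \<noteq> 0" "a + of_nat (Suc r) \<noteq> 0"
      "pochhammer a (Suc r) \<noteq> 0" "pochhammer (a + 1) (Suc r) \<noteq> 0"
    using P by auto
  have "(\<Sum>s\<le>Suc r. of_nat (Suc r choose s) * (-1) ^ s / (a + of_nat s)) =
          (\<Sum>s\<le>r. of_nat (r choose s) * (-1) ^ s / (a + of_nat s)) -
          (\<Sum>s\<le>r. of_nat (r choose s) * (-1) ^ s / (a + 1 + of_nat s))"
    using sum_binomial_Suc[of r "\<lambda>s. (-1) ^ s / (a + of_nat s)"]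
    by (simp add: sum_negf add_ac)
  also have "\<dots> = fact r / pochhammer a (Suc r) - fact r / pochhammer (a + 1) (Suc r)"
    using nz by (simp add: Suc.IH)
  also have "\<dots> = fact r * (a + of_nat (Suc r)) / P - fact r * a / P"
  proof -
    have "fact r / pochhammer a (Suc r) = fact r * (a + of_nat (Suc r)) / P"
      unfolding P(1) using nz by simp
    moreover have "fact r / pochhammer (a + 1) (Suc r) = fact r * a / P"
      unfolding P(2) using nz by simp
    ultimately show ?thesis by simp
  qed
  also have "\<dots> = fact (Suc r) / P"
    by (simp add: diff_divide_distrib[symmetric] algebra_simps)
  finally show ?case unfolding P_def .
qed

lemma fact_div_pochhammer_eq_prod:
  fixes a :: real
  assumes "0 < a"
  shows "fact i / pochhammer (a + 1) i = (\<Prod>r=1..i. real r / (real r + a))"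
proof (induction i)
  case (Suc i)
  have "fact (Suc i) / pochhammer (a + 1) (Suc i) =
          real (Suc i) / (real (Suc i) + a) * (fact i / pochhammer (a + 1) i)"
    by (simp add: pochhammer_rec' times_divide_times_eq add_ac)
  then show ?case
    using Suc.IH by (simp add: prod.nat_ivl_Suc')
qed simp

text \<open>Probability that entry \<open>l\<close> of row \<open>i\<close> (both counted from 0) is read.\<close>
definition read_prob :: "nat \<Rightarrow> nat \<Rightarrow> nat \<Rightarrow> real" where
  "read_prob k i l = (\<Prod>r=1..i. real (r * k) / real (r * k + l))"

lemma read_prob_eq_alternating_sum:
  assumes "0 < k" "0 < l"
  shows "read_prob k i l = (\<Sum>s\<le>i. of_nat (i choose s) * (-1) ^ s * (real l / real (l + s * k)))"
proof -
  define a where "a = real l / real k"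
  have a: "0 < a" using assms by (simp add: a_def)
  have "(\<Sum>s\<le>i. of_nat (i choose s) * (-1) ^ s * (real l / real (l + s * k))) =
          a * (\<Sum>s\<le>i. of_nat (i choose s) * (-1) ^ s / (a + of_nat s))"
    unfolding sum_distrib_left using assms by (intro sum.cong refl) (simp add: a_def field_simps)
  also have "\<dots> = a * (fact i / (a * pochhammer (a + 1) i))"
    using a pochhammer_pos[of a "Suc i"] pochhammer_pos[of "a + 1" i]
    by (subst alternating_binomial_reciprocal_sum) (simp_all add: pochhammer_rec)
  also have "\<dots> = (\<Prod>r=1..i. real r / (real r + a))"
    using a by (simp add: fact_div_pochhammer_eq_prod)
  also have "\<dots> = read_prob k i l"
    unfolding read_prob_def using assms by (intro prod.cong refl) (simp add: a_def field_simps)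
  finally show ?thesis ..
qed

lemma prod_of_bool:
  "finite A \<Longrightarrow> (\<Prod>a\<in>A. of_bool (P a)) = (of_bool (\<forall>a\<in>A. P a) :: 'b::comm_semiring_1)"
  by (induction A rule: finite_induct) auto

lemma of_bool_none_inclusion_exclusion:
  assumes "finite A"
  shows "(of_bool (\<forall>a\<in>A. \<not> P a) :: 'b::comm_ring_1) =
           (\<Sum>T\<in>Pow A. (-1) ^ card T * of_bool (\<forall>a\<in>T. P a))"
proof -
  have "(of_bool (\<forall>a\<in>A. \<not> P a) :: 'b) = (\<Prod>a\<in>A. - of_bool (P a) + 1)"
    using assms by (simp add: prod_of_bool[symmetric] of_bool_not_iff)
  also have "\<dots> = (\<Sum>T\<in>Pow A. (\<Prod>a\<in>T. - of_bool (P a)) * (\<Prod>a\<in>A - T. 1))"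
    using assms by (rule prod_add)
  also have "\<dots> = (\<Sum>T\<in>Pow A. (-1) ^ card T * of_bool (\<forall>a\<in>T. P a))"
    using assms by (intro sum.cong refl) (simp add: prod_uminus prod_of_bool finite_subset)
  finally show ?thesis .
qed

lemma (in prob_space) expectation_of_bool:
  "expectation (\<lambda>x. of_bool (Q x)) = \<P>(x in M. Q x)"
proof -
  have "expectation (\<lambda>x. of_bool (Q x)) = expectation (indicator {x \<in> space M. Q x})"
    by (intro Bochner_Integration.integral_cong) (auto simp: indicator_def)
  also have "\<dots> = \<P>(x in M. Q x)"
    by (simp add: Int_absorb2)
  finally show ?thesis .
qed

lemma (in prob_space) integrable_of_bool:
  assumes "{x \<in> space M. Q x} \<in> events"
  shows "integrable M (\<lambda>x. of_bool (Q x) :: real)"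
proof -
  have "integrable M (indicator {x \<in> space M. Q x} :: _ \<Rightarrow> real)"
    using assms by (intro integrable_real_indicator) (simp_all add: less_top[symmetric])
  then show ?thesis
    by (rule Bochner_Integration.integrable_cong[THEN iffD1, OF refl, rotated]) (auto simp: indicator_def)
qed

lemma (in prob_space) prob_none_inclusion_exclusion:
  assumes "finite A" "\<And>a. a \<in> A \<Longrightarrow> {x \<in> space M. P a x} \<in> events"
  shows "\<P>(x in M. \<forall>a\<in>A. \<not> P a x) = (\<Sum>T\<in>Pow A. (-1) ^ card T * \<P>(x in M. \<forall>a\<in>T. P a x))"
proof -
  have events: "{x \<in> space M. \<forall>a\<in>T. P a x} \<in> events" if "T \<subseteq> A" for T
    using assms finite_subset[OF that] that by (intro sets.sets_Collect_finite_All) auto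
  have "integrable M (\<lambda>x. (-1) ^ card T * of_bool (\<forall>a\<in>T. P a x) :: real)" if "T \<in> Pow A" for T
    using events that by (intro Bochner_Integration.integrable_mult_right integrable_of_bool) auto
  then have "expectation (\<lambda>x. \<Sum>T\<in>Pow A. (-1) ^ card T * of_bool (\<forall>a\<in>T. P a x) :: real) =
               (\<Sum>T\<in>Pow A. (-1) ^ card T * expectation (\<lambda>x. of_bool (\<forall>a\<in>T. P a x)))"
    by simp
  then show ?thesis
    using assms(1) by (simp add: expectation_of_bool[symmetric] of_bool_none_inclusion_exclusion)
qed

abbreviation unif01 :: "real measure" where
  "unif01 \<equiv> uniform_measure lborel {0..1}"

lemma prob_space_unif01: "prob_space unif01"
  by (rule prob_space_uniform_measure) auto

lemma product_sigma_finite_unif01: "product_sigma_finite (\<lambda>_. unif01)"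
  unfolding product_sigma_finite_def
  by (auto intro: prob_space_imp_sigma_finite prob_space_unif01)

lemma prob_space_PiM_unif01: "prob_space (PiM I (\<lambda>_. unif01))"
  by (rule prob_space_PiM) (rule prob_space_unif01)

text \<open>Both comparisons are needed below: strict maxima give disjoint events, weak maxima a cover.\<close>
lemma emeasure_unif01_le_less:
  assumes "R = (<) \<or> R = (\<le>)"
  shows "emeasure unif01 {t. R t z} = ennreal (max 0 (min 1 z))"
proof -
  have "{0..1} \<inter> {t. R t z} = (if 1 < z then {0..1} else if R = (<) then {0..<z} else {0..z})"
    using assms by auto
  then have "emeasure lborel ({0..1} \<inter> {t. R t z}) = ennreal (max 0 (min 1 z))"
    by (cases "0 \<le> z") auto
  moreover have "{t. R t z} \<in> sets borel"
    using assms by auto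
  ultimately show ?thesis
    by (simp add: divide_ennreal_def)
qed

lemma nn_integral_unif01_power:
  "(\<integral>\<^sup>+z. ennreal (max 0 (min 1 z)) ^ m \<partial>unif01) = ennreal (1 / (real m + 1))"
proof -
  have "(\<integral>\<^sup>+z. ennreal (max 0 (min 1 z)) ^ m \<partial>unif01) =
          (\<integral>\<^sup>+z. ennreal (max 0 (min 1 z)) ^ m * indicator {0..1} z \<partial>lborel)"
    by (simp add: nn_integral_uniform_measure divide_ennreal_def)
  also have "\<dots> = (\<integral>\<^sup>+z. ennreal (z ^ m) * indicator {0..1} z \<partial>lborel)"
    by (intro nn_integral_cong) (auto simp: ennreal_power split: split_indicator)
  also have "\<dots> = ennreal (1 / (real m + 1))"
  proof (subst nn_integral_FTC_Icc[where F = "\<lambda>z. z ^ Suc m / Suc m"])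
    show "((\<lambda>z. z ^ Suc m / Suc m) has_real_derivative z ^ m) (at z)" for z :: real
      using DERIV_cdivide[OF DERIV_pow[of "Suc m" z], of "Suc m"] by simp
  qed auto
  finally show ?thesis .
qed

lemma sets_PiM_unif01_le_less:
  assumes "R = (<) \<or> R = (\<le>)" "\<delta> \<in> I" "\<gamma> \<in> I"
  shows "{x \<in> space (PiM I (\<lambda>_. unif01)). R (x \<delta>) (x \<gamma>)} \<in> sets (PiM I (\<lambda>_. unif01))"
  using assms by (elim disjE) (simp_all, measurable)

lemma nn_integral_PiM_unif01_all_below:
  assumes R: "R = (<) \<or> R = (\<le>)" and J: "finite J" "D \<subseteq> J"
  shows "(\<integral>\<^sup>+x. indicator {x. \<forall>\<delta>\<in>D. R (x \<delta>) z} x \<partial>PiM J (\<lambda>_. unif01))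
           = ennreal (max 0 (min 1 z)) ^ card D"
proof -
  interpret product_sigma_finite "\<lambda>_. unif01" by (rule product_sigma_finite_unif01)
  define A where "A \<delta> = (if \<delta> \<in> D then {t. R t z} else UNIV)" for \<delta>
  have A: "A \<delta> \<in> sets unif01" for \<delta>
    using R by (auto simp: A_def)
  have "(\<integral>\<^sup>+x. indicator {x. \<forall>\<delta>\<in>D. R (x \<delta>) z} x \<partial>PiM J (\<lambda>_. unif01)) =
          (\<integral>\<^sup>+x. indicator (PiE J A) x \<partial>PiM J (\<lambda>_. unif01))"
    using J by (intro nn_integral_cong) (auto simp: space_PiM A_def PiE_def Pi_def split: split_indicator)
  also have "\<dots> = (\<Prod>\<delta>\<in>J. emeasure unif01 (A \<delta>))"
    using J A by (simp add: emeasure_PiM sets_PiM_I_finite)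
  also have "\<dots> = (\<Prod>\<delta>\<in>J. if \<delta> \<in> D then ennreal (max 0 (min 1 z)) else 1)"
    using prob_space.emeasure_space_1[OF prob_space_unif01]
    by (intro prod.cong refl) (simp add: A_def emeasure_unif01_le_less[OF R])
  also have "\<dots> = ennreal (max 0 (min 1 z)) ^ card D"
    using J by (simp add: prod.If_cases Int_absorb1)
  finally show ?thesis .
qed

text \<open>Given \<open>x \<gamma> = z\<close>, the coordinates in \<open>D\<close> lie below \<open>z\<close> independently, each with
  probability \<open>z\<close>, and \<open>\<integral>\<^sub>0\<^sup>1 z\<^sup>m dz = 1 / (m + 1)\<close>.\<close>
lemma measure_PiM_unif01_all_below:
  assumes R: "R = (<) \<or> R = (\<le>)" and I: "finite I" "\<gamma> \<in> I" "D \<subseteq> I - {\<gamma>}"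
  shows "\<P>(x in PiM I (\<lambda>_. unif01). \<forall>\<delta>\<in>D. R (x \<delta>) (x \<gamma>)) = 1 / (real (card D) + 1)"
proof -
  interpret product_sigma_finite "\<lambda>_. unif01" by (rule product_sigma_finite_unif01)
  interpret prob_space "PiM I (\<lambda>_. unif01)" by (rule prob_space_PiM_unif01)
  define J where "J = I - {\<gamma>}"
  have IJ: "I = insert \<gamma> J" "\<gamma> \<notin> J" "finite J" "D \<subseteq> J"
    using I by (auto simp: J_def)
  define S where "S = {x \<in> space (PiM I (\<lambda>_. unif01)). \<forall>\<delta>\<in>D. R (x \<delta>) (x \<gamma>)}"
  have S: "S \<in> sets (PiM I (\<lambda>_. unif01))"
    unfolding S_def using I finite_subset[OF I(3)]
    by (intro sets.sets_Collect_finite_All sets_PiM_unif01_le_less[OF R]) auto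
  have slice: "indicator S (x(\<gamma> := z)) = indicator {x. \<forall>\<delta>\<in>D. R (x \<delta>) z} x"
    if "x \<in> space (PiM J (\<lambda>_. unif01))" for x z
    using that IJ by (auto simp: S_def space_PiM PiE_def extensional_def split: split_indicator)
  have "emeasure (PiM I (\<lambda>_. unif01)) S = (\<integral>\<^sup>+x. indicator S x \<partial>PiM I (\<lambda>_. unif01))"
    using S by simp
  also have "\<dots> = (\<integral>\<^sup>+z. \<integral>\<^sup>+x. indicator S (x(\<gamma> := z)) \<partial>PiM J (\<lambda>_. unif01) \<partial>unif01)"
    unfolding IJ(1) using S[unfolded IJ(1)] IJ by (intro product_nn_integral_insert_rev) auto
  also have "\<dots> = (\<integral>\<^sup>+z. ennreal (max 0 (min 1 z)) ^ card D \<partial>unif01)"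
  proof (intro nn_integral_cong)
    fix z
    have "(\<integral>\<^sup>+x. indicator S (x(\<gamma> := z)) \<partial>PiM J (\<lambda>_. unif01)) =
            (\<integral>\<^sup>+x. indicator {x. \<forall>\<delta>\<in>D. R (x \<delta>) z} x \<partial>PiM J (\<lambda>_. unif01))"
      by (intro nn_integral_cong) (simp add: slice)
    then show "(\<integral>\<^sup>+x. indicator S (x(\<gamma> := z)) \<partial>PiM J (\<lambda>_. unif01)) =
                 ennreal (max 0 (min 1 z)) ^ card D"
      by (simp only: nn_integral_PiM_unif01_all_below[OF R IJ(3,4)])
  qed
  also have "\<dots> = ennreal (1 / (real (card D) + 1))"
    by (rule nn_integral_unif01_power)
  finally show ?thesis
    unfolding S_def by (simp add: emeasure_eq_measure)
qed

text \<open>The event says that the maximum over \<open>B \<union> C\<close> is attained in \<open>C\<close>.  It contains the disjoint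
  union of the events ``\<open>\<gamma> \<in> C\<close> is the strict maximum'' and is covered by the events ``\<open>\<gamma> \<in> C\<close>
  is a weak maximum'', all of probability \<open>1 / (card B + card C)\<close>.\<close>
lemma measure_PiM_unif01_below_some:
  assumes I: "finite I" "B \<subseteq> I" "C \<subseteq> I" "B \<inter> C = {}" "C \<noteq> {}"
  shows "\<P>(x in PiM I (\<lambda>_. unif01). \<forall>\<beta>\<in>B. \<exists>\<gamma>\<in>C. x \<beta> < x \<gamma>) = card C / (card B + card C)"
proof -
  let ?M = "PiM I (\<lambda>_. unif01)"
  interpret prob_space ?M by (rule prob_space_PiM_unif01)
  have fin: "finite B" "finite C" using I(1-3) by (auto intro: finite_subset)
  define G where "G = {x \<in> space ?M. \<forall>\<beta>\<in>B. \<exists>\<gamma>\<in>C. x \<beta> < x \<gamma>}"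
  define top where "top R \<gamma> = {x \<in> space ?M. \<forall>\<delta>\<in>(B \<union> C) - {\<gamma>}. R (x \<delta>) (x \<gamma>)}"
    for R :: "real \<Rightarrow> real \<Rightarrow> bool" and \<gamma>
  have top_sets: "top R \<gamma> \<in> events" if "R = (<) \<or> R = (\<le>)" "\<gamma> \<in> C" for R \<gamma>
    unfolding top_def using that I fin
    by (intro sets.sets_Collect_finite_All sets_PiM_unif01_le_less) auto
  have prob_top: "prob (top R \<gamma>) = 1 / (card B + card C)" if "R = (<) \<or> R = (\<le>)" "\<gamma> \<in> C" for R \<gamma>
  proof -
    have "card ((B \<union> C) - {\<gamma>}) + 1 = card (B \<union> C)"
      using that fin by (simp add: card_Suc_Diff1 del: card_Diff_insert)
    also have "\<dots> = card B + card C"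
      using I fin by (simp add: card_Un_disjoint)
    finally have "card ((B \<union> C) - {\<gamma>}) + 1 = card B + card C" .
    then show ?thesis
      unfolding top_def using that I
      by (subst measure_PiM_unif01_all_below) (auto simp flip: of_nat_Suc)
  qed
  have G_sets: "G \<in> events"
    unfolding G_def using I fin
    by (intro sets.sets_Collect_finite_All sets.sets_Collect_finite_Ex sets_PiM_unif01_le_less) auto
  have "(\<Union>\<gamma>\<in>C. top (<) \<gamma>) \<subseteq> G"
    using I unfolding top_def G_def by fastforce
  moreover have "disjoint_family_on (top (<)) C"
    unfolding disjoint_family_on_def
  proof (intro ballI impI)
    fix \<gamma> \<gamma>' assume "\<gamma> \<in> C" "\<gamma>' \<in> C" "\<gamma> \<noteq> \<gamma>'"
    then have "x \<gamma>' < x \<gamma> \<and> x \<gamma> < x \<gamma>'" if "x \<in> top (<) \<gamma>" "x \<in> top (<) \<gamma>'" for x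
      using that unfolding top_def by auto
    then show "top (<) \<gamma> \<inter> top (<) \<gamma>' = {}" by (meson disjoint_iff less_asym)
  qed
  ultimately have lower: "(\<Sum>\<gamma>\<in>C. prob (top (<) \<gamma>)) \<le> prob G"
    using top_sets fin G_sets
    by (subst finite_measure_finite_Union[symmetric]) (auto intro: finite_measure_mono)
  have "G \<subseteq> (\<Union>\<gamma>\<in>C. top (\<le>) \<gamma>)"
  proof
    fix x assume x: "x \<in> G"
    have "Max (x ` C) \<in> x ` C"
      using fin I by (intro Max_in) auto
    then obtain \<gamma> where \<gamma>: "\<gamma> \<in> C" "x \<gamma> = Max (x ` C)" by auto
    have below_max: "x \<gamma>' \<le> x \<gamma>" if "\<gamma>' \<in> C" for \<gamma>'
      using that \<gamma> fin by simp
    have "x \<in> top (\<le>) \<gamma>"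
      using x below_max unfolding G_def top_def by (fastforce intro: less_imp_le order.trans)
    with \<gamma> show "x \<in> (\<Union>\<gamma>\<in>C. top (\<le>) \<gamma>)" by blast
  qed
  then have upper: "prob G \<le> (\<Sum>\<gamma>\<in>C. prob (top (\<le>) \<gamma>))"
    using top_sets fin
    by (intro order.trans[OF finite_measure_mono finite_measure_subadditive_finite]) auto
  from lower upper show ?thesis
    unfolding G_def by (simp add: prob_top)
qed

lemma ex_all_le_iff_all_ex_le:
  fixes x :: "'j \<Rightarrow> 'a::linorder"
  assumes "finite J" "J \<noteq> {}"
  shows "(\<exists>j'\<in>J. \<forall>j\<in>L. y j \<le> x j') \<longleftrightarrow> (\<forall>j\<in>L. \<exists>j'\<in>J. y j \<le> x j')"
proof
  assume "\<forall>j\<in>L. \<exists>j'\<in>J. y j \<le> x j'"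
  moreover have "Max (x ` J) \<in> x ` J"
    using assms by (intro Max_in) auto
  then obtain m where "m \<in> J" "x m = Max (x ` J)" by auto
  moreover have "x j' \<le> x m" if "j' \<in> J" for j'
    using that assms \<open>x m = Max (x ` J)\<close> by simp
  ultimately show "\<exists>j'\<in>J. \<forall>j\<in>L. y j \<le> x j'"
    by (meson order.trans)
qed auto

lemma measure_read_event_alternating:
  assumes "i < n" "0 < l" "l \<le> k"
  shows "\<P>(x in matrix_measure n k. \<forall>j<l. \<forall>i'<i. \<exists>j'<k. x (i, j) \<le> x (i', j'))
           = (\<Sum>s\<le>i. of_nat (i choose s) * (-1) ^ s * (real l / real (l + s * k)))"
proof -
  define I where "I = {..<n} \<times> {..<k}"
  let ?M = "PiM I (\<lambda>_. unif01)"
  interpret prob_space ?M by (rule prob_space_PiM_unif01)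
  define row_below where "row_below i' x \<longleftrightarrow> (\<forall>\<beta>\<in>{i'} \<times> {..<k}. \<exists>\<gamma>\<in>{i} \<times> {..<l}. x \<beta> < x \<gamma>)"
    for i' and x :: "nat \<times> nat \<Rightarrow> real"
  have events: "{x \<in> space ?M. \<forall>i'\<in>T. row_below i' x} \<in> events" if "T \<subseteq> {..<i}" for T
    unfolding row_below_def using that assms finite_subset[OF that]
    by (intro sets.sets_Collect_finite_All sets.sets_Collect_finite_Ex sets_PiM_unif01_le_less)
       (auto simp: I_def)
  have prob_row_below: "prob {x \<in> space ?M. \<forall>i'\<in>T. row_below i' x} = real l / real (l + card T * k)"
    if "T \<subseteq> {..<i}" for T
  proof -
    have "{x \<in> space ?M. \<forall>i'\<in>T. row_below i' x} =
            {x \<in> space ?M. \<forall>\<beta>\<in>T \<times> {..<k}. \<exists>\<gamma>\<in>{i} \<times> {..<l}. x \<beta> < x \<gamma>}"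
      unfolding row_below_def by blast
    also have "prob \<dots> = card ({i} \<times> {..<l}) / (card (T \<times> {..<k}) + card ({i} \<times> {..<l}))"
      using that assms by (intro measure_PiM_unif01_below_some) (auto simp: I_def)
    finally show ?thesis
      using finite_subset[OF that] by (simp add: card_cartesian_product add.commute)
  qed
  have not_row_below: "\<not> row_below i' x \<longleftrightarrow> (\<forall>j<l. \<exists>j'<k. x (i, j) \<le> x (i', j'))" for i' x
  proof -
    have "\<not> row_below i' x \<longleftrightarrow> (\<exists>j'\<in>{..<k}. \<forall>j\<in>{..<l}. x (i, j) \<le> x (i', j'))"
      unfolding row_below_def by (auto simp: not_less)
    also have "\<dots> \<longleftrightarrow> (\<forall>j\<in>{..<l}. \<exists>j'\<in>{..<k}. x (i, j) \<le> x (i', j'))"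
      using assms by (intro ex_all_le_iff_all_ex_le) (auto simp: lessThan_empty_iff)
    finally show ?thesis by auto
  qed
  have event_eq: "{x \<in> space ?M. \<forall>j<l. \<forall>i'<i. \<exists>j'<k. x (i, j) \<le> x (i', j')} =
                   {x \<in> space ?M. \<forall>i'\<in>{..<i}. \<not> row_below i' x}"
    unfolding not_row_below by blast
  have "prob {x \<in> space ?M. \<forall>j<l. \<forall>i'<i. \<exists>j'<k. x (i, j) \<le> x (i', j')} =
               (\<Sum>T\<in>Pow {..<i}. (-1) ^ card T * prob {x \<in> space ?M. \<forall>i'\<in>T. row_below i' x})"
    unfolding event_eq by (rule prob_none_inclusion_exclusion) (use events[of "{_}"] in auto)
  also have "\<dots> = (\<Sum>T\<in>Pow {..<i}. (-1) ^ card T * (real l / real (l + card T * k)))"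
    by (intro sum.cong refl) (simp add: prob_row_below)
  also have "\<dots> = (\<Sum>s\<le>i. of_nat (i choose s) * (-1) ^ s * (real l / real (l + s * k)))"
    using sum_Pow_card[of "{..<i}" "\<lambda>s. (-1) ^ s * (real l / real (l + s * k))"]
    by (simp add: mult.assoc)
  finally show ?thesis
    by (simp add: matrix_measure_def I_def)
qed


lemma measure_read_event:
  assumes "i < n" "l < k"
  shows "\<P>(x in matrix_measure n k. \<forall>j<l. \<forall>i'<i. \<exists>j'<k. x (i, j) \<le> x (i', j'))
           = read_prob k i l"
proof (cases "l = 0")
  case True
  interpret prob_space "matrix_measure n k"
    unfolding matrix_measure_def by (rule prob_space_PiM_unif01)
  show ?thesis
    using True assms by (simp add: read_prob_def prob_space)
next
  case False
  with assms show ?thesis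
    by (simp add: measure_read_event_alternating read_prob_eq_alternating_sum)
qed

lemma expected_reads:
  "(\<integral>A. real (reads n k (\<lambda>i j. A (i, j))) \<partial>matrix_measure n k) = (\<Sum>i<n. \<Sum>l<k. read_prob k i l)"
proof -
  let ?M = "matrix_measure n k"
  interpret prob_space ?M
    unfolding matrix_measure_def by (rule prob_space_PiM_unif01)
  define read where "read i l A \<longleftrightarrow> (\<forall>j<l. \<forall>i'<i. \<exists>j'<k. A (i, j) \<le> A (i', j'))"
    for i l and A :: "nat \<times> nat \<Rightarrow> real"
  have read_iff: "read i l A \<longleftrightarrow> (\<forall>j\<in>{..<l}. \<forall>i'\<in>{..<i}. \<exists>j'\<in>{..<k}. A (i, j) \<le> A (i', j'))"
    for i l A
    by (auto simp: read_def)
  have events: "{A \<in> space ?M. read i l A} \<in> events" if "i < n" "l < k" for i l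
    unfolding read_iff matrix_measure_def using that
    by (intro sets.sets_Collect_finite_All sets.sets_Collect_finite_Ex sets_PiM_unif01_le_less) auto
  have "(\<integral>A. real (reads n k (\<lambda>i j. A (i, j))) \<partial>?M) =
          expectation (\<lambda>A. \<Sum>i<n. \<Sum>l<k. of_bool (read i l A) :: real)"
    by (simp add: reads_eq_sum read_def del: sum_of_bool_eq)
  also have "\<dots> = (\<Sum>i<n. \<Sum>l<k. expectation (\<lambda>A. of_bool (read i l A)))"
  proof -
    have int: "integrable ?M (\<lambda>A. of_bool (read i l A) :: real)" if "i \<in> {..<n}" "l \<in> {..<k}" for i l
      using that by (intro integrable_of_bool events) auto
    have "expectation (\<lambda>A. \<Sum>i<n. \<Sum>l<k. of_bool (read i l A) :: real) =
            (\<Sum>i<n. expectation (\<lambda>A. \<Sum>l<k. of_bool (read i l A)))"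
      using int by (intro Bochner_Integration.integral_sum Bochner_Integration.integrable_sum)
    also have "\<dots> = (\<Sum>i<n. \<Sum>l<k. expectation (\<lambda>A. of_bool (read i l A)))"
      using int by (intro sum.cong refl Bochner_Integration.integral_sum)
    finally show ?thesis .
  qed
  also have "\<dots> = (\<Sum>i<n. \<Sum>l<k. read_prob k i l)"
    by (intro sum.cong refl) (simp add: expectation_of_bool read_def measure_read_event)
  finally show ?thesis .
qed

lemma sum_read_prob_binomial:
  assumes "0 < k" "0 < l"
  shows "(\<Sum>i<n. read_prob k i l) =
           (\<Sum>s<n. of_nat (n choose Suc s) * (-1) ^ s * (real l / real (l + s * k)))"
  using assms sum_binomial_hockey_stick[where f = "\<lambda>s. (-1) ^ s * (real l / real (l + s * k))"]
  by (simp add: read_prob_eq_alternating_sum mult.assoc)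

theorem mainTheorem1:
  fixes n k :: nat
  assumes "n \<ge> 1" and "k \<ge> 1"
  shows "(\<integral>A. real (reads n k (\<lambda>i j. A (i, j))) \<partial>matrix_measure n k)
           = real (n * k) + (\<Sum>l=1..k-1. \<Sum>j=1..n-1.
               real (n choose (j+1)) * (-1) ^ j * (real l / real (l + j * k)))
      \<and> (\<integral>A. real (reads n k (\<lambda>i j. A (i, j))) \<partial>matrix_measure n k)
           = real (n + k - 1) + (\<Sum>l=1..k-1. \<Sum>j=1..n-1.
               \<Prod>r=1..j. real (r * k) / real (r * k + l))"
proof -
  have "(\<integral>A. real (reads n k (\<lambda>i j. A (i, j))) \<partial>matrix_measure n k) = (\<Sum>l<k. \<Sum>i<n. read_prob k i l)"
    unfolding expected_reads by (rule sum.swap)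
  also have "\<dots> = (\<Sum>i<n. read_prob k i 0) + (\<Sum>l=1..k-1. \<Sum>i<n. read_prob k i l)"
    using assms by (intro sum_lessThan_split_zero) simp
  also have "(\<Sum>i<n. read_prob k i 0) = real n"
    using assms by (simp add: read_prob_def)
  finally have expect: "(\<integral>A. real (reads n k (\<lambda>i j. A (i, j))) \<partial>matrix_measure n k) =
                          real n + (\<Sum>l=1..k-1. \<Sum>i<n. read_prob k i l)" .
  have "(\<Sum>l=1..k-1. \<Sum>i<n. read_prob k i l) = (\<Sum>l=1..k-1. real n + (\<Sum>j=1..n-1.
          real (n choose (j+1)) * (-1) ^ j * (real l / real (l + j * k))))"
    using assms
    by (intro sum.cong refl)
       (simp add: sum_read_prob_binomial sum_lessThan_split_zero)
  moreover have "(\<Sum>l=1..k-1. \<Sum>i<n. read_prob k i l) =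
                   (\<Sum>l=1..k-1. 1 + (\<Sum>j=1..n-1. \<Prod>r=1..j. real (r * k) / real (r * k + l)))"
    using assms by (intro sum.cong refl) (simp add: sum_lessThan_split_zero read_prob_def)
  ultimately show ?thesis
    unfolding expect using assms by (simp add: sum.distrib algebra_simps)
qed

end
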